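(* Let $K,L\subseteq S$ with $k<l$ for all $k\in K$, $l\in L$. Then in $A$: $$\tau^-_K\tau^-_L=\sum_{i=1}^{\#K}(-1)^{\#K-i}\tau^-_{(K\cup L)\setminus\{k_i\}}=\sum_{i=1}^{\#L}(-1)^{i-1}\tau^-_{(K\cup L)\setminus\{l_i\}}.$$
   Context: $S$ is a finite set with a total order $<$, $R$ a commutative ring with $1$, $q\in R$, $A=R\langle t_s\mid s\in S\rangle$ the free associative algebra. Subsets are enumerated increasingly, $K=\{k_1<\dots<k_{\#K}\}$, etc. For $J=\{j_1<\dots<j_{\#J}\}$, $t_J=t_{j_1}\cdots t_{j_{\#J}}$; for $I=\{j_{\alpha_1}<\dots<j_{\alpha_{\#I}}\}\subseteq J$, $\ell_J(I)=\sum_\nu(\alpha_\nu-\nu)$; $\tau^-_J=\sum_{I\subseteq J,\ \#I\text{ odd}}(-1)^{\ell_J(I)}(-q)^{(\#I-1)/2}t_{J\setminus I}$. *)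

theory Defs
  imports Main
begin

text \<open>The free associative algebra R<t_s | s in S> is represented by coefficient functions
  on words ('s list => 'r); it embeds injectively (as the finitely supported functions)
  into the noncommutative formal power series ring, whose product is the convolution below.\<close>

definition mon :: "'s list \<Rightarrow> ('s list \<Rightarrow> 'r::comm_ring_1)" where
  "mon v = (\<lambda>w. if w = v then 1 else 0)"

definition nc_mult :: "('s list \<Rightarrow> 'r::comm_ring_1) \<Rightarrow> ('s list \<Rightarrow> 'r) \<Rightarrow> ('s list \<Rightarrow> 'r)" where
  "nc_mult f g = (\<lambda>w. \<Sum>i\<le>length w. f (take i w) * g (drop i w))"

definition tJ :: "'s::linorder set \<Rightarrow> ('s list \<Rightarrow> 'r::comm_ring_1)" where
  "tJ J = mon (sorted_list_of_set J)"

text \<open>Position (1-based) of x in J.\<close>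
definition pos :: "'s::linorder set \<Rightarrow> 's \<Rightarrow> nat" where
  "pos J x = card {j \<in> J. j \<le> x}"

definition ell :: "'s::linorder set \<Rightarrow> 's set \<Rightarrow> nat" where
  "ell J I = (\<Sum>\<nu><card I. pos J (sorted_list_of_set I ! \<nu>) - (\<nu> + 1))"

definition tau_minus :: "'r::comm_ring_1 \<Rightarrow> 's::linorder set \<Rightarrow> ('s list \<Rightarrow> 'r)" where
  "tau_minus q J = (\<lambda>w. \<Sum>I\<in>{I. I \<subseteq> J \<and> odd (card I)}.
      (-1) ^ ell J I * (- q) ^ ((card I - 1) div 2) * tJ (J - I) w)"

end

theory Submission
  imports Defs
begin

text \<open>
  The element \<open>tau_minus q J\<close> is supported on the
  increasing words \<open>w\<close> with letters in \<open>J\<close>, and its coefficient there depends only on the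
  deleted set \<open>J - set w\<close>; the exponent \<open>ell J I\<close> counts the pairs \<open>m < x\<close> with
  \<open>m \<in> J - I\<close> and \<open>x \<in> I\<close>. Since \<open>K\<close> lies below \<open>L\<close>, an increasing word factors in exactly
  one way into a word over \<open>K\<close> followed by a word over \<open>L\<close>, so the coefficient of \<open>w\<close> in the
  product is the product of the two coefficients for \<open>M = set w\<close>. On the right-hand side only
  the deleted letters \<open>k \<notin> M\<close> contribute, and counting pairs shows that their coefficients all
  agree up to the sign \<open>(-1) ^ card {x \<in> K - M. k < x}\<close> (resp. \<open>(-1) ^ card {x \<in> L - M. x < l}\<close>).
  Such an alternating sum over a finite set is \<open>1\<close> or \<open>0\<close> according to the parity of its size,
  which is exactly the parity condition under which the product is nonzero.
\<close>

lemma strict_sorted_nth_le_iff: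
  fixes xs :: "'a::linorder list"
  assumes "sorted_wrt (<) xs" "i < length xs" "j < length xs"
  shows "xs ! i \<le> xs ! j \<longleftrightarrow> i \<le> j"
proof (cases i j rule: linorder_cases)
  case less then show ?thesis using sorted_wrt_nth_less[OF assms(1) less assms(3)] by simp
next
  case greater then show ?thesis using sorted_wrt_nth_less[OF assms(1) greater assms(2)] by simp
qed simp

lemma pos_nth_sorted_list_of_set:
  assumes "finite I" "\<nu> < card I"
  shows "pos I (sorted_list_of_set I ! \<nu>) = Suc \<nu>"
proof -
  let ?s = "sorted_list_of_set I"
  have len: "length ?s = card I" by simp
  have le_iff: "m < card I \<Longrightarrow> ?s ! m \<le> ?s ! \<nu> \<longleftrightarrow> m \<le> \<nu>" for m
    using strict_sorted_nth_le_iff[of ?s m \<nu>] assms by simp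
  have "{j\<in>I. j \<le> ?s ! \<nu>} = (!) ?s ` {..\<nu>}"
  proof (intro equalityI subsetI)
    fix j assume "j \<in> {j\<in>I. j \<le> ?s ! \<nu>}"
    then have "j \<in> set ?s" "j \<le> ?s ! \<nu>" using assms(1) by auto
    then obtain m where "m < card I" "j = ?s ! m" "?s ! m \<le> ?s ! \<nu>"
      by (metis in_set_conv_nth len)
    then show "j \<in> (!) ?s ` {..\<nu>}" using le_iff by auto
  next
    fix j assume "j \<in> (!) ?s ` {..\<nu>}"
    then obtain m where "m \<le> \<nu>" "j = ?s ! m" by auto
    with assms have "m < card I" by simp
    then have "j \<in> set ?s" using \<open>j = ?s ! m\<close> len by (metis nth_mem)
    with \<open>m \<le> \<nu>\<close> \<open>j = ?s ! m\<close> show "j \<in> {j\<in>I. j \<le> ?s ! \<nu>}"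
      using assms(1) le_iff[OF \<open>m < card I\<close>] by simp
  qed
  moreover have "inj_on ((!) ?s) {..\<nu>}"
    using assms by (intro inj_onI) (auto simp: nth_eq_iff_index_eq)
  ultimately show ?thesis
    by (simp add: pos_def card_image)
qed

lemma sum_nth_sorted_list_of_set:
  "finite I \<Longrightarrow> (\<Sum>\<nu><card I. h (sorted_list_of_set I ! \<nu>)) = sum h I"
  by (rule sum.reindex_bij_betw[OF bij_betw_nth]) simp_all

lemma sum_atLeast1_nth_sorted_list_of_set:
  assumes "finite K"
  shows "(\<Sum>i=1..card K. F i (sorted_list_of_set K ! (i - 1))) = (\<Sum>k\<in>K. F (pos K k) k)"
proof -
  have "(\<Sum>i=1..card K. F i (sorted_list_of_set K ! (i - 1)))
      = (\<Sum>\<nu><card K. F (Suc \<nu>) (sorted_list_of_set K ! \<nu>))"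
    by (simp add: sum.atLeast1_atMost_eq)
  also have "\<dots> = (\<Sum>\<nu><card K. F (pos K (sorted_list_of_set K ! \<nu>)) (sorted_list_of_set K ! \<nu>))"
    using assms by (simp add: pos_nth_sorted_list_of_set)
  also have "\<dots> = (\<Sum>k\<in>K. F (pos K k) k)"
    using assms by (rule sum_nth_sorted_list_of_set)
  finally show ?thesis .
qed

lemma pos_add_card_greater:
  assumes "finite J"
  shows "pos J x + card {j\<in>J. x < j} = card J"
proof -
  have "J = {j\<in>J. j \<le> x} \<union> {j\<in>J. x < j}" by auto
  then have "card J = card ({j\<in>J. j \<le> x} \<union> {j\<in>J. x < j})" by simp
  also have "\<dots> = pos J x + card {j\<in>J. x < j}"
    unfolding pos_def using assms by (intro card_Un_disjoint) auto
  finally show ?thesis by simp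
qed

lemma card_less_add_card_greater:
  fixes A :: "'a::linorder set"
  assumes "finite A" "x \<notin> A"
  shows "card {a\<in>A. a < x} + card {a\<in>A. x < a} = card A"
proof -
  have "a < x \<or> x < a" if "a \<in> A" for a
    using that assms(2) by (cases a x rule: linorder_cases) auto
  then have "A = {a\<in>A. a < x} \<union> {a\<in>A. x < a}" by auto
  then have "card A = card ({a\<in>A. a < x} \<union> {a\<in>A. x < a})" by simp
  also have "\<dots> = card {a\<in>A. a < x} + card {a\<in>A. x < a}"
    using assms(1) by (intro card_Un_disjoint) auto
  finally show ?thesis ..
qed

definition inversions :: "'a::linorder set \<Rightarrow> 'a set \<Rightarrow> nat" where
  "inversions M I = (\<Sum>x\<in>I. card {m\<in>M. m < x})"

lemma inversions_Un_left:
  assumes "finite M\<^sub>1" "finite M\<^sub>2" "M\<^sub>1 \<inter> M\<^sub>2 = {}"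
  shows "inversions (M\<^sub>1 \<union> M\<^sub>2) I = inversions M\<^sub>1 I + inversions M\<^sub>2 I"
proof -
  have "{m\<in>M\<^sub>1 \<union> M\<^sub>2. m < x} = {m\<in>M\<^sub>1. m < x} \<union> {m\<in>M\<^sub>2. m < x}" for x
    by auto
  then have "card {m\<in>M\<^sub>1 \<union> M\<^sub>2. m < x} = card {m\<in>M\<^sub>1. m < x} + card {m\<in>M\<^sub>2. m < x}" for x
    using assms by (simp add: card_Un_disjoint disjoint_iff)
  then show ?thesis unfolding inversions_def by (simp add: sum.distrib)
qed

lemma inversions_Un_right:
  "finite I\<^sub>1 \<Longrightarrow> finite I\<^sub>2 \<Longrightarrow> I\<^sub>1 \<inter> I\<^sub>2 = {} \<Longrightarrow>
    inversions M (I\<^sub>1 \<union> I\<^sub>2) = inversions M I\<^sub>1 + inversions M I\<^sub>2"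
  unfolding inversions_def by (rule sum.union_disjoint)

lemma inversions_below:
  assumes "\<forall>m\<in>M. \<forall>x\<in>I. m < x"
  shows "inversions M I = card M * card I"
proof -
  have "{m\<in>M. m < x} = M" if "x \<in> I" for x using assms that by auto
  then show ?thesis unfolding inversions_def by simp
qed

lemma inversions_above:
  assumes "\<forall>m\<in>M. \<forall>x\<in>I. x < m"
  shows "inversions M I = 0"
  unfolding inversions_def
proof (intro sum.neutral ballI)
  fix x assume "x \<in> I"
  then have "{m\<in>M. m < x} = {}" using assms by (auto dest: less_asym)
  then show "card {m\<in>M. m < x} = 0" by (simp only: card.empty)
qed

lemma ell_eq_inversions:
  assumes "finite J" "I \<subseteq> J"
  shows "ell J I = inversions (J - I) I"
proof -
  have fin: "finite I" using assms finite_subset by blast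
  have "ell J I = (\<Sum>\<nu><card I. card {j\<in>J - I. j < sorted_list_of_set I ! \<nu>})"
    unfolding ell_def
  proof (rule sum.cong)
    fix \<nu> assume "\<nu> \<in> {..<card I}"
    then have \<nu>: "\<nu> < card I" by simp
    define x where "x = sorted_list_of_set I ! \<nu>"
    have "x \<in> I" unfolding x_def using fin \<nu> by (metis nth_mem set_sorted_list_of_set length_sorted_list_of_set)
    then have "{j\<in>J. j \<le> x} = {j\<in>I. j \<le> x} \<union> {j\<in>J - I. j < x}"
      using assms by (auto simp: le_less)
    then have "pos J x = pos I x + card {j\<in>J - I. j < x}"
      unfolding pos_def using assms fin by (simp add: card_Un_disjoint disjoint_iff)
    then show "pos J x - (\<nu> + 1) = card {j\<in>J - I. j < x}"
      using pos_nth_sorted_list_of_set[OF fin \<nu>] x_def by simp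
  qed simp
  also have "\<dots> = inversions (J - I) I"
    unfolding inversions_def using fin by (rule sum_nth_sorted_list_of_set)
  finally show ?thesis .
qed

lemma neg_one_power_eq_if_even_add: "even (a + b) \<Longrightarrow> (-1 :: 'r::comm_ring_1) ^ a = (-1) ^ b"
  by (simp add: minus_one_power_iff)

lemma neg_one_power_mult_eq_if_even_add:
  assumes "even (a + b + c)"
  shows "(-1 :: 'r::comm_ring_1) ^ a * (-1) ^ b = (-1) ^ c"
  using assms unfolding power_add[symmetric] by (rule neg_one_power_eq_if_even_add)

lemma sum_neg_one_power_card_greater:
  fixes A :: "'a::linorder set"
  assumes "finite A"
  shows "(\<Sum>k\<in>A. (-1 :: 'r::comm_ring_1) ^ card {x\<in>A. k < x}) = (if odd (card A) then 1 else 0)"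
  using assms
proof (induction A rule: finite_linorder_max_induct)
  case (insert b A)
  let ?f = "\<lambda>k. (-1 :: 'r) ^ card {x\<in>insert b A. k < x}"
  have "b \<notin> A" using insert by auto
  have "card {x\<in>insert b A. k < x} = Suc (card {x\<in>A. k < x})" if "k \<in> A" for k
  proof -
    have "{x\<in>insert b A. k < x} = insert b {x\<in>A. k < x}" using insert that by auto
    then show ?thesis using insert by auto
  qed
  then have "sum ?f A = - (\<Sum>k\<in>A. (-1) ^ card {x\<in>A. k < x})"
    by (simp add: sum_negf[symmetric])
  moreover have "?f b = 1"
  proof -
    have "{x\<in>insert b A. b < x} = {}" using insert by auto
    then show ?thesis by (simp only: card.empty power_0)
  qed
  ultimately have "sum ?f (insert b A) = 1 - (if odd (card A) then 1 else 0)"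
    using insert \<open>b \<notin> A\<close> by simp
  then show ?case
    using insert \<open>b \<notin> A\<close> by simp
qed simp

lemma sum_neg_one_power_card_less:
  fixes A :: "'a::linorder set"
  assumes "finite A"
  shows "(\<Sum>k\<in>A. (-1 :: 'r::comm_ring_1) ^ card {x\<in>A. x < k}) = (if odd (card A) then 1 else 0)"
proof -
  have "(-1 :: 'r) ^ card {x\<in>A. x < k} = (-1) ^ (card A - 1) * (-1) ^ card {x\<in>A. k < x}"
    if "k \<in> A" for k
  proof -
    have "{x\<in>A. x \<le> k} = insert k {x\<in>A. x < k}" using that by auto
    then have "card {x\<in>A. x < k} + card {x\<in>A. k < x} + 1 = card A"
      using assms pos_add_card_greater[OF assms, of k] unfolding pos_def by simp
    then have "(-1 :: 'r) ^ card {x\<in>A. x < k} = (-1) ^ (card A - 1 + card {x\<in>A. k < x})"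
      by (intro neg_one_power_eq_if_even_add) presburger
    then show ?thesis by (simp only: power_add)
  qed
  then have "(\<Sum>k\<in>A. (-1 :: 'r) ^ card {x\<in>A. x < k})
      = (-1) ^ (card A - 1) * (\<Sum>k\<in>A. (-1) ^ card {x\<in>A. k < x})"
    by (simp add: sum_distrib_left)
  also have "\<dots> = (if odd (card A) then 1 else 0)"
    using assms by (auto simp: sum_neg_one_power_card_greater)
  finally show ?thesis .
qed

lemma tJ_apply:
  assumes "finite A"
  shows "tJ A w = (if sorted_wrt (<) w \<and> set w = A then 1 else 0)"
proof -
  have "sorted_list_of_set A = w \<longleftrightarrow> sorted_wrt (<) w \<and> set w = A"
    using assms by (metis sorted_list_of_set.strict_sorted_key_list_of_set set_sorted_list_of_set strict_sorted_equal)
  then show ?thesis unfolding tJ_def mon_def by auto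
qed

definition tau_coeff :: "'r::comm_ring_1 \<Rightarrow> 's::linorder set \<Rightarrow> 's set \<Rightarrow> 'r" where
  "tau_coeff q J I = (if odd (card I) then (-1) ^ ell J I * (-q) ^ ((card I - 1) div 2) else 0)"

lemma tau_minus_apply:
  assumes "finite J"
  shows "tau_minus q J w = (if sorted_wrt (<) w \<and> set w \<subseteq> J then tau_coeff q J (J - set w) else 0)"
proof -
  let ?S = "{I. I \<subseteq> J \<and> odd (card I)}"
  have "tau_minus q J w = (\<Sum>I\<in>?S. if I = J - set w then
      (if sorted_wrt (<) w \<and> set w \<subseteq> J then tau_coeff q J I else 0) else 0)"
    unfolding tau_minus_def
  proof (rule sum.cong)
    fix I assume "I \<in> ?S"
    then have "I \<subseteq> J" "odd (card I)" by auto
    moreover have "set w = J - I \<longleftrightarrow> set w \<subseteq> J \<and> I = J - set w" using \<open>I \<subseteq> J\<close> by auto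
    ultimately show "(-1) ^ ell J I * (-q) ^ ((card I - 1) div 2) * tJ (J - I) w = (if I = J - set w then
      (if sorted_wrt (<) w \<and> set w \<subseteq> J then tau_coeff q J I else 0) else 0)"
      using assms by (auto simp: tJ_apply tau_coeff_def)
  qed simp
  also have "\<dots> = (if sorted_wrt (<) w \<and> set w \<subseteq> J then tau_coeff q J (J - set w) else 0)"
    using assms by (simp add: sum.delta tau_coeff_def)
  finally show ?thesis .
qed

lemma ell_split:
  fixes K L M :: "'a::linorder set"
  assumes "finite K" "finite L" and KL: "\<forall>k\<in>K. \<forall>l\<in>L. k < l" and "M \<subseteq> K \<union> L"
  shows "ell (K \<union> L) (K \<union> L - M) = ell K (K - M) + ell L (L - M) + card (K \<inter> M) * card (L - M)"
proof -
  have M: "M = (K \<inter> M) \<union> (L \<inter> M)" and "K \<union> L - M = (K - M) \<union> (L - M)"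
    using assms(4) by auto
  have "ell (K \<union> L) (K \<union> L - M) = inversions M (K \<union> L - M)"
    using ell_eq_inversions[of "K \<union> L" "K \<union> L - M"] assms by (simp add: double_diff)
  also have "\<dots> = inversions ((K \<inter> M) \<union> (L \<inter> M)) ((K - M) \<union> (L - M))"
    using M \<open>K \<union> L - M = (K - M) \<union> (L - M)\<close> by simp
  also have "\<dots> = inversions (K \<inter> M) (K - M) + inversions (L \<inter> M) (K - M)
      + inversions (K \<inter> M) (L - M) + inversions (L \<inter> M) (L - M)"
  proof -
    have "K \<inter> L = {}" using KL less_irrefl by blast
    then have "K \<inter> M \<inter> (L \<inter> M) = {}" "(K - M) \<inter> (L - M) = {}" by auto
    then show ?thesis
      using assms by (simp add: inversions_Un_left inversions_Un_right)
  qed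
  also have "inversions (L \<inter> M) (K - M) = 0"
    using KL by (intro inversions_above) auto
  also have "inversions (K \<inter> M) (L - M) = card (K \<inter> M) * card (L - M)"
    using KL by (intro inversions_below) auto
  finally show ?thesis
    using assms by (simp add: ell_eq_inversions Diff_Diff_Int Int_commute)
qed

lemma ell_delete:
  assumes "finite J" "M \<subseteq> J" "k \<in> J - M"
  shows "ell (J - {k}) (J - {k} - M) + card {m\<in>M. m < k} = ell J (J - M)"
proof -
  have "J - {k} - (J - {k} - M) = M" "J - (J - M) = M" "J - {k} - M = J - M - {k}"
    using assms by auto
  moreover have "ell (J - {k}) (J - {k} - M) = inversions (J - {k} - (J - {k} - M)) (J - {k} - M)"
    using assms by (intro ell_eq_inversions) auto
  moreover have "ell J (J - M) = inversions (J - (J - M)) (J - M)"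
    using assms by (intro ell_eq_inversions) auto
  ultimately show ?thesis
    using assms sum.remove[of "J - M" k "\<lambda>x. card {m\<in>M. m < x}"]
    by (simp add: inversions_def)
qed

lemma card_Un_diff_split:
  fixes K L M :: "'a::linorder set"
  assumes "finite K" "finite L" "\<forall>k\<in>K. \<forall>l\<in>L. k < l"
  shows "card (K \<union> L - M) = card (K - M) + card (L - M)"
proof -
  have "K \<inter> L = {}" using assms(3) less_irrefl by blast
  then have "(K - M) \<inter> (L - M) = {}" by auto
  then show ?thesis using assms by (simp add: Un_Diff card_Un_disjoint)
qed

lemma tau_coeff_mult:
  fixes q :: "'r::comm_ring_1"
  assumes "finite K" "finite L" and KL: "\<forall>k\<in>K. \<forall>l\<in>L. k < l" and "M \<subseteq> K \<union> L"
  shows "tau_coeff q K (K - M) * tau_coeff q L (L - M) =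
    (if odd (card (K - M)) \<and> odd (card (L - M))
     then (-1) ^ (ell (K \<union> L) (K \<union> L - M) + card (K \<inter> M)) * (-q) ^ ((card (K \<union> L - M) - 2) div 2)
     else 0)"
proof (cases "odd (card (K - M)) \<and> odd (card (L - M))")
  case True
  then obtain p r where p: "card (K - M) = 2 * p + 1" and r: "card (L - M) = 2 * r + 1"
    by (meson oddE)
  have exponent: "(card (K \<union> L - M) - 2) div 2 = p + r"
    using card_Un_diff_split[OF assms(1-3)] p r by simp
  have "ell (K \<union> L) (K \<union> L - M) + card (K \<inter> M)
      = ell K (K - M) + ell L (L - M) + 2 * (card (K \<inter> M) * (r + 1))"
    using ell_split[OF assms] r by (simp add: algebra_simps)
  then have sign: "(-1 :: 'r) ^ ell K (K - M) * (-1) ^ ell L (L - M)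
      = (-1) ^ (ell (K \<union> L) (K \<union> L - M) + card (K \<inter> M))"
    by (intro neg_one_power_mult_eq_if_even_add) presburger
  have "tau_coeff q K (K - M) * tau_coeff q L (L - M)
      = ((-1) ^ ell K (K - M) * (-1) ^ ell L (L - M)) * ((-q) ^ p * (-q) ^ r)"
    by (simp add: tau_coeff_def p r mult_ac)
  then show ?thesis
    using True by (simp only: sign exponent power_add) simp
qed (auto simp: tau_coeff_def)

definition tau_coeff_common :: "'r::comm_ring_1 \<Rightarrow> 's::linorder set \<Rightarrow> 's set \<Rightarrow> 's set \<Rightarrow> 'r" where
  "tau_coeff_common q K L M = (if even (card (K \<union> L - M))
     then (-1) ^ (ell (K \<union> L) (K \<union> L - M) + card (K \<inter> M)) * (-q) ^ ((card (K \<union> L - M) - 2) div 2)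
     else 0)"

lemma tau_coeff_delete:
  fixes q :: "'r::comm_ring_1"
  assumes "finite K" "finite L" "M \<subseteq> K \<union> L" "k \<in> K \<union> L - M"
  shows "tau_coeff q (K \<union> L - {k}) (K \<union> L - {k} - M)
    = (-1) ^ (card {m\<in>M. m < k} + card (K \<inter> M)) * tau_coeff_common q K L M"
proof -
  let ?J = "K \<union> L"
  have "?J - {k} - M = ?J - M - {k}" by auto
  then have card: "card (?J - {k} - M) = card (?J - M) - 1" "card (?J - M) \<noteq> 0"
    using assms by auto
  moreover have "odd (card (?J - M) - 1) \<longleftrightarrow> even (card (?J - M))" "card (?J - M) - 1 - 1 = card (?J - M) - 2"
    using card(2) by presburger+
  moreover have "(-1 :: 'r) ^ (card {m\<in>M. m < k} + card (K \<inter> M)) * (-1) ^ (ell ?J (?J - M) + card (K \<inter> M))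
      = (-1) ^ ell (?J - {k}) (?J - {k} - M)"
    using ell_delete[OF finite_UnI[OF assms(1,2)] assms(3,4)]
    by (intro neg_one_power_mult_eq_if_even_add) presburger
  ultimately show ?thesis
    unfolding tau_coeff_def tau_coeff_common_def by (simp add: mult.assoc[symmetric])
qed

lemma tau_coeff_mult_expand_first:
  fixes q :: "'r::comm_ring_1" and K L M :: "'s::linorder set"
  assumes fin: "finite K" "finite L" and KL: "\<forall>k\<in>K. \<forall>l\<in>L. k < l" and M: "M \<subseteq> K \<union> L"
  shows "tau_coeff q K (K - M) * tau_coeff q L (L - M) =
    (\<Sum>k\<in>K - M. (-1) ^ (card K - pos K k) * tau_coeff q (K \<union> L - {k}) (K \<union> L - {k} - M))"
proof -
  have summand: "(-1) ^ (card K - pos K k) * tau_coeff q (K \<union> L - {k}) (K \<union> L - {k} - M)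
      = (-1) ^ card {x\<in>K - M. k < x} * tau_coeff_common q K L M" if k: "k \<in> K - M" for k
  proof -
    have "{j\<in>K. k < j} = {x\<in>K - M. k < x} \<union> {m\<in>K \<inter> M. k < m}"
      and "{x\<in>K - M. k < x} \<inter> {m\<in>K \<inter> M. k < m} = {}" by auto
    then have "card K - pos K k = card {x\<in>K - M. k < x} + card {m\<in>K \<inter> M. k < m}"
      using pos_add_card_greater[OF fin(1), of k] fin by (simp add: card_Un_disjoint)
    moreover have "{m\<in>M. m < k} = {m\<in>K \<inter> M. m < k}"
      using k KL M by (auto dest: less_asym)
    moreover have "card {m\<in>K \<inter> M. m < k} + card {m\<in>K \<inter> M. k < m} = card (K \<inter> M)"
      using k fin by (intro card_less_add_card_greater) auto
    ultimately have "(-1 :: 'r) ^ (card K - pos K k) * (-1) ^ (card {m\<in>M. m < k} + card (K \<inter> M))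
        = (-1) ^ card {x\<in>K - M. k < x}"
      by (intro neg_one_power_mult_eq_if_even_add) presburger
    moreover have "k \<in> K \<union> L - M" using k by blast
    ultimately show ?thesis
      by (simp only: tau_coeff_delete[OF fin M] mult.assoc[symmetric])
  qed
  have "(\<Sum>k\<in>K - M. (-1) ^ (card K - pos K k) * tau_coeff q (K \<union> L - {k}) (K \<union> L - {k} - M))
      = (\<Sum>k\<in>K - M. (-1) ^ card {x\<in>K - M. k < x}) * tau_coeff_common q K L M"
    unfolding sum_distrib_right by (intro sum.cong refl summand)
  also have "\<dots> = (if odd (card (K - M)) then 1 else 0) * tau_coeff_common q K L M"
    using fin sum_neg_one_power_card_greater[of "K - M", where 'r = 'r] by simp
  also have "\<dots> = tau_coeff q K (K - M) * tau_coeff q L (L - M)"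
    using tau_coeff_mult[OF fin KL M, of q] card_Un_diff_split[OF fin KL, of M]
    by (auto simp: tau_coeff_common_def)
  finally show ?thesis ..
qed

lemma tau_coeff_mult_expand_second:
  fixes q :: "'r::comm_ring_1" and K L M :: "'s::linorder set"
  assumes fin: "finite K" "finite L" and KL: "\<forall>k\<in>K. \<forall>l\<in>L. k < l" and M: "M \<subseteq> K \<union> L"
  shows "tau_coeff q K (K - M) * tau_coeff q L (L - M) =
    (\<Sum>l\<in>L - M. (-1) ^ (pos L l - 1) * tau_coeff q (K \<union> L - {l}) (K \<union> L - {l} - M))"
proof -
  have summand: "(-1) ^ (pos L l - 1) * tau_coeff q (K \<union> L - {l}) (K \<union> L - {l} - M)
      = (-1) ^ card {x\<in>L - M. x < l} * tau_coeff_common q K L M" if l: "l \<in> L - M" for l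
  proof -
    have "{j\<in>L. j \<le> l} = insert l ({x\<in>L - M. x < l} \<union> {m\<in>L \<inter> M. m < l})"
      and "{x\<in>L - M. x < l} \<inter> {m\<in>L \<inter> M. m < l} = {}"
      using l by auto
    then have "pos L l - 1 = card {x\<in>L - M. x < l} + card {m\<in>L \<inter> M. m < l}"
      unfolding pos_def using fin by (simp add: card_Un_disjoint)
    moreover have "{m\<in>M. m < l} = (K \<inter> M) \<union> {m\<in>L \<inter> M. m < l}"
      and "(K \<inter> M) \<inter> {m\<in>L \<inter> M. m < l} = {}"
      using l KL M by (auto dest: less_asym)
    then have "card {m\<in>M. m < l} = card (K \<inter> M) + card {m\<in>L \<inter> M. m < l}"
      using fin by (simp add: card_Un_disjoint)
    ultimately have "(-1 :: 'r) ^ (pos L l - 1) * (-1) ^ (card {m\<in>M. m < l} + card (K \<inter> M))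
        = (-1) ^ card {x\<in>L - M. x < l}"
      by (intro neg_one_power_mult_eq_if_even_add) presburger
    moreover have "l \<in> K \<union> L - M" using l by blast
    ultimately show ?thesis
      by (simp only: tau_coeff_delete[OF fin M] mult.assoc[symmetric])
  qed
  have "(\<Sum>l\<in>L - M. (-1) ^ (pos L l - 1) * tau_coeff q (K \<union> L - {l}) (K \<union> L - {l} - M))
      = (\<Sum>l\<in>L - M. (-1) ^ card {x\<in>L - M. x < l}) * tau_coeff_common q K L M"
    unfolding sum_distrib_right by (intro sum.cong refl summand)
  also have "\<dots> = (if odd (card (L - M)) then 1 else 0) * tau_coeff_common q K L M"
    using fin sum_neg_one_power_card_less[of "L - M", where 'r = 'r] by simp
  also have "\<dots> = tau_coeff q K (K - M) * tau_coeff q L (L - M)"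
    using tau_coeff_mult[OF fin KL M, of q] card_Un_diff_split[OF fin KL, of M]
    by (auto simp: tau_coeff_common_def)
  finally show ?thesis ..
qed

lemma split_sorted_word:
  fixes K L :: "'a::linorder set"
  assumes KL: "\<forall>k\<in>K. \<forall>l\<in>L. k < l" and "sorted_wrt (<) w" "set w \<subseteq> K \<union> L"
  shows "\<exists>!i. i \<le> length w \<and> set (take i w) \<subseteq> K \<and> set (drop i w) \<subseteq> L"
proof -
  have disjoint: "K \<inter> L = {}" using KL less_irrefl by blast
  have "\<exists>i\<le>length w. set (take i w) \<subseteq> K \<and> set (drop i w) \<subseteq> L"
    using assms(2,3)
  proof (induction w)
    case (Cons x w)
    show ?case
    proof (cases "x \<in> K")
      case True
      with Cons obtain i where "i \<le> length w" "set (take i w) \<subseteq> K" "set (drop i w) \<subseteq> L" by auto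
      with True show ?thesis by (intro exI[of _ "Suc i"]) auto
    next
      case False
      have "set w \<subseteq> L"
      proof
        fix y assume "y \<in> set w"
        with Cons.prems have "x < y" "y \<in> K \<union> L" by auto
        with False Cons.prems KL show "y \<in> L" by (auto dest: less_asym)
      qed
      with False Cons.prems show ?thesis by (intro exI[of _ 0]) auto
    qed
  qed simp
  moreover have "i = j" if i: "i \<le> length w" "set (take i w) \<subseteq> K" "set (drop i w) \<subseteq> L"
    and j: "j \<le> length w" "set (take j w) \<subseteq> K" "set (drop j w) \<subseteq> L" for i j
  proof (rule ccontr)
    assume "i \<noteq> j"
    then consider "i < j" | "j < i" by linarith
    then obtain a b where ab: "a < b" "b \<le> length w" "set (take b w) \<subseteq> K" "set (drop a w) \<subseteq> L"
    proof cases
      case 1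
      with i j show ?thesis by (intro that[of i j])
    next
      case 2
      with i j show ?thesis by (intro that[of j i])
    qed
    have "take b w ! a = w ! a" "a < length (take b w)" using ab by simp_all
    then have "w ! a \<in> set (take b w)" by (metis nth_mem)
    moreover have "drop a w ! 0 = w ! a" "0 < length (drop a w)" using ab by simp_all
    then have "w ! a \<in> set (drop a w)" by (metis nth_mem)
    ultimately show False using ab disjoint by auto
  qed
  ultimately show ?thesis by blast
qed

lemma tau_minus_take_mult_drop:
  fixes K L :: "'s::linorder set" and q :: "'r::comm_ring_1"
  assumes fin: "finite K" "finite L" and KL: "\<forall>k\<in>K. \<forall>l\<in>L. k < l"
  shows "tau_minus q K (take i w) * tau_minus q L (drop i w) =
    (if sorted_wrt (<) w \<and> set (take i w) \<subseteq> K \<and> set (drop i w) \<subseteq> L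
     then tau_coeff q K (K - set w) * tau_coeff q L (L - set w) else 0)"
proof (cases "set (take i w) \<subseteq> K \<and> set (drop i w) \<subseteq> L")
  case True
  have "K \<inter> L = {}" using KL less_irrefl by blast
  moreover have "set w = set (take i w) \<union> set (drop i w)"
    by (metis append_take_drop_id set_append)
  ultimately have "K - set (take i w) = K - set w" "L - set (drop i w) = L - set w"
    using True by auto
  with True fin have factors:
    "tau_minus q K (take i w) = (if sorted_wrt (<) (take i w) then tau_coeff q K (K - set w) else 0)"
    "tau_minus q L (drop i w) = (if sorted_wrt (<) (drop i w) then tau_coeff q L (L - set w) else 0)"
    by (simp_all only: tau_minus_apply simp_thms)
  have "\<forall>x\<in>set (take i w). \<forall>y\<in>set (drop i w). x < y"
    using True KL by blast
  then have "sorted_wrt (<) (take i w @ drop i w) \<longleftrightarrow> sorted_wrt (<) (take i w) \<and> sorted_wrt (<) (drop i w)"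
    unfolding sorted_wrt_append by blast
  then have sorted: "sorted_wrt (<) w \<longleftrightarrow> sorted_wrt (<) (take i w) \<and> sorted_wrt (<) (drop i w)"
    by (simp only: append_take_drop_id)
  show ?thesis
    using True unfolding factors sorted by simp
next
  case False
  then show ?thesis using fin by (auto simp: tau_minus_apply)
qed

lemma nc_mult_tau_minus_apply:
  fixes K L :: "'s::linorder set" and q :: "'r::comm_ring_1"
  assumes fin: "finite K" "finite L" and KL: "\<forall>k\<in>K. \<forall>l\<in>L. k < l"
  shows "nc_mult (tau_minus q K) (tau_minus q L) w =
    (if sorted_wrt (<) w \<and> set w \<subseteq> K \<union> L
     then tau_coeff q K (K - set w) * tau_coeff q L (L - set w) else 0)"
proof -
  define splits where "splits i \<longleftrightarrow> set (take i w) \<subseteq> K \<and> set (drop i w) \<subseteq> L" for i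
  define c where "c = tau_coeff q K (K - set w) * tau_coeff q L (L - set w)"
  have "nc_mult (tau_minus q K) (tau_minus q L) w
      = (\<Sum>i\<le>length w. if sorted_wrt (<) w \<and> splits i then c else 0)"
    unfolding nc_mult_def tau_minus_take_mult_drop[OF assms] splits_def c_def conj_assoc ..
  also have "\<dots> = (if sorted_wrt (<) w \<and> set w \<subseteq> K \<union> L then c else 0)"
  proof (cases "sorted_wrt (<) w \<and> set w \<subseteq> K \<union> L")
    case True
    then obtain i\<^sub>0 where "i\<^sub>0 \<le> length w" "splits i\<^sub>0"
      and unique: "\<And>i. i \<le> length w \<Longrightarrow> splits i \<Longrightarrow> i = i\<^sub>0"
      using split_sorted_word[OF KL, of w] unfolding splits_def by blast
    have "(\<Sum>i\<le>length w. if sorted_wrt (<) w \<and> splits i then c else 0)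
        = (\<Sum>i\<le>length w. if i = i\<^sub>0 then c else 0)"
      using True \<open>splits i\<^sub>0\<close> by (intro sum.cong refl) (auto dest: unique)
    with True \<open>i\<^sub>0 \<le> length w\<close> show ?thesis by simp
  next
    case False
    have "set w = set (take i w) \<union> set (drop i w)" for i
      by (metis append_take_drop_id set_append)
    then have "(sorted_wrt (<) w \<and> splits i) = False" for i
      using False unfolding splits_def by blast
    then show ?thesis using False by (simp only: if_False sum.neutral_const)
  qed
  finally show ?thesis unfolding c_def .
qed

lemma sum_tau_minus_delete_apply:
  fixes J X :: "'s::linorder set" and q :: "'r::comm_ring_1"
  assumes "finite J" "finite X"
  shows "(\<Sum>k\<in>X. f k * tau_minus q (J - {k}) w) =
    (if sorted_wrt (<) w \<and> set w \<subseteq> J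
     then \<Sum>k\<in>X - set w. f k * tau_coeff q (J - {k}) (J - {k} - set w) else 0)"
proof (cases "sorted_wrt (<) w \<and> set w \<subseteq> J")
  case True
  then have "(\<Sum>k\<in>X. f k * tau_minus q (J - {k}) w)
      = (\<Sum>k\<in>X. if k \<notin> set w then f k * tau_coeff q (J - {k}) (J - {k} - set w) else 0)"
    using assms by (intro sum.cong) (auto simp: tau_minus_apply)
  also have "\<dots> = (\<Sum>k\<in>X - set w. f k * tau_coeff q (J - {k}) (J - {k} - set w))"
    by (simp only: sum.inter_filter[OF assms(2)] set_diff_eq)
  finally show ?thesis using True by simp
qed (use assms in \<open>auto simp: tau_minus_apply intro!: sum.neutral\<close>)

theorem lemma3p2:
  fixes K L :: "'s::{linorder,finite} set" and q :: "'r::comm_ring_1"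
  assumes "\<forall>k\<in>K. \<forall>l\<in>L. k < l"
  shows "nc_mult (tau_minus q K) (tau_minus q L) =
           (\<lambda>w. \<Sum>i=1..card K. (-1) ^ (card K - i) *
              tau_minus q ((K \<union> L) - {sorted_list_of_set K ! (i - 1)}) w)
       \<and> nc_mult (tau_minus q K) (tau_minus q L) =
           (\<lambda>w. \<Sum>i=1..card L. (-1) ^ (i - 1) *
              tau_minus q ((K \<union> L) - {sorted_list_of_set L ! (i - 1)}) w)"
proof -
  have fin: "finite K" "finite L" by simp_all
  note product = nc_mult_tau_minus_apply[OF fin assms]
  have first: "nc_mult (tau_minus q K) (tau_minus q L) w =
      (\<Sum>i=1..card K. (-1) ^ (card K - i) * tau_minus q ((K \<union> L) - {sorted_list_of_set K ! (i - 1)}) w)"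
    for w
  proof -
    have "(\<Sum>i=1..card K. (-1) ^ (card K - i) * tau_minus q ((K \<union> L) - {sorted_list_of_set K ! (i - 1)}) w)
        = (\<Sum>k\<in>K. (-1) ^ (card K - pos K k) * tau_minus q (K \<union> L - {k}) w)"
      using sum_atLeast1_nth_sorted_list_of_set[OF fin(1),
          where F = "\<lambda>i k. (-1) ^ (card K - i) * tau_minus q (K \<union> L - {k}) w"] .
    then show ?thesis
      using tau_coeff_mult_expand_first[OF fin assms, of "set w" q]
      by (simp add: product sum_tau_minus_delete_apply)
  qed
  have second: "nc_mult (tau_minus q K) (tau_minus q L) w =
      (\<Sum>i=1..card L. (-1) ^ (i - 1) * tau_minus q ((K \<union> L) - {sorted_list_of_set L ! (i - 1)}) w)"
    for w
  proof -
    have "(\<Sum>i=1..card L. (-1) ^ (i - 1) * tau_minus q ((K \<union> L) - {sorted_list_of_set L ! (i - 1)}) w)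
        = (\<Sum>l\<in>L. (-1) ^ (pos L l - 1) * tau_minus q (K \<union> L - {l}) w)"
      using sum_atLeast1_nth_sorted_list_of_set[OF fin(2),
          where F = "\<lambda>i l. (-1) ^ (i - 1) * tau_minus q (K \<union> L - {l}) w"] .
    then show ?thesis
      using tau_coeff_mult_expand_second[OF fin assms, of "set w" q]
      by (simp add: product sum_tau_minus_delete_apply)
  qed
  show ?thesis
    using first second by (intro conjI ext)
qed

end
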